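(* Fix $0<\alpha<1$ and let $\Lambda\subset\mathbb{R}^n$ be a closed subset of Lebesgue measure zero. Let $f\in L_{2\alpha}(\mathbb{R}^n)\cap C^\infty(\mathbb{R}^n\setminus\Lambda)$ and let $f_\epsilon=f*\eta_\epsilon$ be its standard mollification. Then for every $x\in\mathbb{R}^n\setminus\Lambda$, $$\lim_{\epsilon\to0}\big((-\Delta)^\alpha f_\epsilon\big)(x)=\big((-\Delta)^\alpha f\big)(x).$$
   Context: $L_{2\alpha}(\mathbb{R}^n)=\{h:\mathbb{R}^n\to\mathbb{R}:\int_{\mathbb{R}^n}\frac{|h(x)|}{1+|x|^{n+2\alpha}}dx<\infty\}$. The standard mollifier: $\eta\in C_0^\infty(\mathbb{R}^n)$, $\eta\geq0$, $\mathrm{supp}(\eta)\subset B_1(0)$, $\int\eta=1$, $\eta_\epsilon(x)=\epsilon^{-n}\eta(x/\epsilon)$, and $f_\epsilon(x)=\int_{\mathbb{R}^n}f(x-y)\eta_\epsilon(y)dy$. The fractional Laplacian is $(-\Delta)^\alpha h(x)=-d_{n,\alpha}\int_{\mathbb{R}^n}\frac{h(x+y)+h(x-y)-2h(x)}{|y|^{n+2\alpha}}dy$ for $h\in L_{2\alpha}(\mathbb{R}^n)$, with $d_{n,\alpha}>0$ the normalizing constant making the Fourier symbol $|\xi|^{2\alpha}$. *)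

theory Defs
  imports "HOL-Analysis.Analysis"
begin

definition dir_deriv :: "'a::euclidean_space \<Rightarrow> ('a \<Rightarrow> real) \<Rightarrow> 'a \<Rightarrow> real" where
  "dir_deriv v f x = deriv (\<lambda>t. f (x + t *\<^sub>R v)) 0"

fun iter_pderiv :: "'a::euclidean_space list \<Rightarrow> ('a \<Rightarrow> real) \<Rightarrow> 'a \<Rightarrow> real" where
  "iter_pderiv [] f = f"
| "iter_pderiv (v # vs) f = dir_deriv v (iter_pderiv vs f)"

definition smooth_on :: "('a::euclidean_space \<Rightarrow> real) \<Rightarrow> 'a set \<Rightarrow> bool" where
  "smooth_on f S \<longleftrightarrow>
     (\<forall>vs. set vs \<subseteq> Basis \<longrightarrow>
        continuous_on S (iter_pderiv vs f) \<and>
        (\<forall>v\<in>Basis. \<forall>x\<in>S. (\<lambda>t. iter_pderiv vs f (x + t *\<^sub>R v)) differentiable (at 0)))"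

definition L2alpha :: "real \<Rightarrow> ('a::euclidean_space \<Rightarrow> real) set" where
  "L2alpha \<alpha> = {h. integrable lebesgue
       (\<lambda>x. \<bar>h x\<bar> / (1 + norm x powr (real DIM('a) + 2 * \<alpha>)))}"

definition std_mollifier :: "('a::euclidean_space \<Rightarrow> real) \<Rightarrow> bool" where
  "std_mollifier \<eta> \<longleftrightarrow> smooth_on \<eta> UNIV \<and> (\<forall>x. \<eta> x \<ge> 0)
     \<and> closure {x. \<eta> x \<noteq> 0} \<subseteq> ball 0 1 \<and> integral\<^sup>L lebesgue \<eta> = 1"

definition mollify :: "('a::euclidean_space \<Rightarrow> real) \<Rightarrow> real \<Rightarrow> ('a \<Rightarrow> real) \<Rightarrow> 'a \<Rightarrow> real" where
  "mollify \<eta> \<epsilon> f x =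
     integral\<^sup>L lebesgue (\<lambda>y. f (x - y) * ((1 / \<epsilon> ^ DIM('a)) * \<eta> ((1 / \<epsilon>) *\<^sub>R y)))"

text \<open>Normalizing constant d_{n,alpha} for which the singular integral below has
  Fourier symbol |xi|^(2 alpha): it equals C(n,alpha)/2 where
  C(n,alpha) = alpha 4^alpha Gamma((n+2 alpha)/2) / (pi^(n/2) Gamma(1-alpha)).\<close>
definition frac_const :: "nat \<Rightarrow> real \<Rightarrow> real" where
  "frac_const n \<alpha> = \<alpha> * 2 powr (2 * \<alpha> - 1) * Gamma ((real n + 2 * \<alpha>) / 2)
                     / (pi powr (real n / 2) * Gamma (1 - \<alpha>))"

definition frac_lap :: "real \<Rightarrow> ('a::euclidean_space \<Rightarrow> real) \<Rightarrow> 'a \<Rightarrow> real" where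
  "frac_lap \<alpha> h x = - frac_const DIM('a) \<alpha> *
     integral\<^sup>L lebesgue (\<lambda>y. (h (x + y) + h (x - y) - 2 * h x)
                              / norm y powr (real DIM('a) + 2 * \<alpha>))"

end

theory Submission
  imports Defs
begin

text \<open>
  Write Phi w for the singular integral defining the fractional Laplacian of f at w. Since f is
  smooth near x, its second differences at points w near x are O(norm y ^ 2), which is integrable
  against norm y powr -(n + 2 alpha) because alpha < 1; for large y the kernel is dominated by the
  weight of L_{2 alpha}, and after the substitution u = w + y only the kernel, not the possibly
  discontinuous f, depends on w. Dominated convergence therefore makes Phi continuous at x, and
  the same majorant bounds the integrals uniformly near x. That justifies Fubini: the fractional
  Laplacian of f_eps at x is the average of Phi (x - z) against eta_eps, and these averages
  converge to Phi x because eta_eps is an approximate identity.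
\<close>

section \<open>Partial derivatives and second differences\<close>

lemma smooth_on_has_real_derivative:
  assumes sm: "smooth_on g S" and vs: "set vs \<subseteq> Basis" and j: "j \<in> Basis"
    and S: "z + t *\<^sub>R j \<in> S"
  shows "((\<lambda>s. iter_pderiv vs g (z + s *\<^sub>R j)) has_real_derivative
           iter_pderiv (j # vs) g (z + t *\<^sub>R j)) (at t)"
proof -
  let ?h = "iter_pderiv vs g" and ?u = "z + t *\<^sub>R j"
  have "(\<lambda>s. ?h (?u + s *\<^sub>R j)) differentiable (at 0)"
    using sm vs j S unfolding smooth_on_def by blast
  then have "((\<lambda>s. ?h (?u + s *\<^sub>R j)) has_real_derivative iter_pderiv (j # vs) g ?u) (at 0)"
    by (simp add: DERIV_deriv_iff_real_differentiable dir_deriv_def)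
  moreover have "(\<lambda>s. ?h (?u + s *\<^sub>R j)) = (\<lambda>s. ?h (z + (s + t) *\<^sub>R j))"
    by (auto simp: algebra_simps)
  ultimately show ?thesis
    using DERIV_shift[of "\<lambda>s. ?h (z + s *\<^sub>R j)" _ 0 t] by simp
qed

lemma abs_diff_le_of_deriv_bound:
  fixes F F' :: "real \<Rightarrow> real"
  assumes "\<And>s. min a b \<le> s \<Longrightarrow> s \<le> max a b \<Longrightarrow>
             (F has_real_derivative F' s) (at s) \<and> \<bar>F' s\<bar> \<le> B"
  shows "\<bar>F b - F a\<bar> \<le> B * \<bar>b - a\<bar>"
proof (cases a b rule: linorder_cases)
  case less
  then obtain z where "a < z" "z < b" "F b - F a = (b - a) * F' z"
    using MVT2[of a b F F'] assms by fastforce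
  with assms[of z] less show ?thesis
    by (simp add: abs_mult mult.commute mult_left_mono)
next
  case greater
  then obtain z where "b < z" "z < a" "F a - F b = (a - b) * F' z"
    using MVT2[of b a F F'] assms by fastforce
  with assms[of z] greater show ?thesis
    by (simp add: abs_mult mult.commute mult_left_mono abs_minus_commute)
qed simp

text \<open>The point with the coordinates of q in the directions A and those of p in the others;
  growing A to Basis moves p to q one coordinate at a time.\<close>
definition coord_mix :: "'a::euclidean_space \<Rightarrow> 'a \<Rightarrow> 'a set \<Rightarrow> 'a" where
  "coord_mix p q A = p + (\<Sum>i\<in>A. ((q - p) \<bullet> i) *\<^sub>R i)"

lemma coord_mix_inner:
  assumes "A \<subseteq> Basis" "k \<in> Basis"
  shows "coord_mix p q A \<bullet> k = p \<bullet> k + (if k \<in> A then (q - p) \<bullet> k else 0)"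
proof -
  have "finite A" using assms finite_subset finite_Basis by blast
  have "(\<Sum>i\<in>A. ((q - p) \<bullet> i) *\<^sub>R i) \<bullet> k = (\<Sum>i\<in>A. if i = k then (q - p) \<bullet> i else 0)"
    using assms by (auto simp: inner_sum_left inner_Basis intro!: sum.cong)
  with \<open>finite A\<close> show ?thesis by (simp add: coord_mix_def inner_add_left)
qed

lemma coord_mix_insert:
  "finite A \<Longrightarrow> j \<notin> A \<Longrightarrow> coord_mix p q (insert j A) = coord_mix p q A + ((q - p) \<bullet> j) *\<^sub>R j"
  by (simp add: coord_mix_def algebra_simps)

lemma coord_mix_Basis: "coord_mix p q Basis = q"
  by (simp add: coord_mix_def euclidean_representation)

lemma abs_diff_le_of_partials_cbox:
  fixes g :: "'a::euclidean_space \<Rightarrow> real"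
  assumes der: "\<And>z i t. i \<in> Basis \<Longrightarrow> z + t *\<^sub>R i \<in> cbox a b \<Longrightarrow>
        ((\<lambda>s. g (z + s *\<^sub>R i)) has_real_derivative d i (z + t *\<^sub>R i)) (at t)"
    and bnd: "\<And>z i. i \<in> Basis \<Longrightarrow> z \<in> cbox a b \<Longrightarrow> \<bar>d i z\<bar> \<le> B"
    and p: "p \<in> cbox a b" and q: "q \<in> cbox a b"
  shows "\<bar>g q - g p\<bar> \<le> B * (\<Sum>i\<in>Basis. \<bar>(q - p) \<bullet> i\<bar>)"
proof -
  have "\<bar>g (coord_mix p q A) - g p\<bar> \<le> B * (\<Sum>i\<in>A. \<bar>(q - p) \<bullet> i\<bar>)" if "A \<subseteq> Basis" for A
    using that
  proof (induction A rule: infinite_finite_induct)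
    case (infinite A)
    then show ?case using finite_subset finite_Basis by blast
  next
    case empty
    then show ?case by (simp add: coord_mix_def)
  next
    case (insert j A)
    let ?z = "coord_mix p q A" and ?c = "(q - p) \<bullet> j"
    have j: "j \<in> Basis" and A: "A \<subseteq> Basis" using insert by auto
    have seg: "?z + t *\<^sub>R j \<in> cbox a b" if t: "min 0 ?c \<le> t" "t \<le> max 0 ?c" for t
    proof -
      have "a \<bullet> k \<le> (?z + t *\<^sub>R j) \<bullet> k \<and> (?z + t *\<^sub>R j) \<bullet> k \<le> b \<bullet> k" if k: "k \<in> Basis" for k
      proof -
        have "a \<bullet> k \<le> p \<bullet> k" "p \<bullet> k \<le> b \<bullet> k" "a \<bullet> k \<le> q \<bullet> k" "q \<bullet> k \<le> b \<bullet> k"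
          using p q k by (auto simp: mem_box)
        then show ?thesis
          using t coord_mix_inner[OF A k, of p q] insert.hyps(2) j k
          by (auto simp: inner_add_left inner_diff_left inner_Basis split: if_splits)
      qed
      then show ?thesis by (simp add: mem_box)
    qed
    have "\<bar>g (?z + ?c *\<^sub>R j) - g (?z + 0 *\<^sub>R j)\<bar> \<le> B * \<bar>?c - 0\<bar>"
      by (rule abs_diff_le_of_deriv_bound[where F'="\<lambda>s. d j (?z + s *\<^sub>R j)"])
         (use seg der[OF j] bnd[OF j] in auto)
    then have "\<bar>g (coord_mix p q (insert j A)) - g ?z\<bar> \<le> B * \<bar>?c\<bar>"
      using coord_mix_insert[OF insert.hyps] by simp
    with insert.IH[OF A] insert.hyps show ?case
      by (simp add: algebra_simps)
  qed
  from this[of Basis] show ?thesis by (simp add: coord_mix_Basis)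
qed

lemma second_difference_le_of_partials:
  fixes f :: "'a::euclidean_space \<Rightarrow> real"
  assumes der: "\<And>z j t. j \<in> Basis \<Longrightarrow> z + t *\<^sub>R j \<in> Q \<Longrightarrow>
        ((\<lambda>s. f (z + s *\<^sub>R j)) has_real_derivative d j (z + t *\<^sub>R j)) (at t)"
    and lip: "\<And>j u v. j \<in> Basis \<Longrightarrow> u \<in> Q \<Longrightarrow> v \<in> Q \<Longrightarrow>
        \<bar>d j u - d j v\<bar> \<le> L * (\<Sum>i\<in>Basis. \<bar>(u - v) \<bullet> i\<bar>)"
    and Q: "\<And>c. (\<forall>i\<in>Basis. \<bar>c \<bullet> i\<bar> \<le> \<bar>y \<bullet> i\<bar>) \<Longrightarrow> w + c \<in> Q"
  shows "\<bar>f (w + y) + f (w - y) - 2 * f w\<bar> \<le> L * (\<Sum>i\<in>Basis. \<bar>y \<bullet> i\<bar>)\<^sup>2"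
proof -
  let ?Y = "\<Sum>i\<in>Basis. \<bar>y \<bullet> i\<bar>"
  let ?m = "coord_mix w (w + y)"
  txt \<open>Adding the coordinate j to A changes ?E A by the increment of
    t \<mapsto> f (?m A + t j) - f (?m A - y + t j) over t \<in> [0, y_j], whose derivative is a difference
    of d j at two points y apart.\<close>
  let ?E = "\<lambda>A. f (?m A) - f w - (f (?m A - y) - f (w - y))"
  have "\<bar>?E A\<bar> \<le> L * ?Y * (\<Sum>i\<in>A. \<bar>y \<bullet> i\<bar>)" if "A \<subseteq> Basis" for A
    using that
  proof (induction A rule: infinite_finite_induct)
    case (infinite A)
    then show ?case using finite_subset finite_Basis by blast
  next
    case empty
    then show ?case by (simp add: coord_mix_def)
  next
    case (insert j A)
    let ?z = "?m A" and ?c = "y \<bullet> j"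
    have j: "j \<in> Basis" and A: "A \<subseteq> Basis" using insert by auto
    have in_Q: "?z + t *\<^sub>R j \<in> Q" "?z - y + t *\<^sub>R j \<in> Q"
      if t: "min 0 ?c \<le> t" "t \<le> max 0 ?c" for t
    proof -
      have "\<bar>(?z + t *\<^sub>R j - w) \<bullet> i\<bar> \<le> \<bar>y \<bullet> i\<bar>" "\<bar>(?z - y + t *\<^sub>R j - w) \<bullet> i\<bar> \<le> \<bar>y \<bullet> i\<bar>"
        if i: "i \<in> Basis" for i
        using coord_mix_inner[OF A i, of w "w + y"] t insert.hyps(2) i j
        by (auto simp: inner_diff_left inner_add_left inner_Basis)
      then have "w + (?z + t *\<^sub>R j - w) \<in> Q" "w + (?z - y + t *\<^sub>R j - w) \<in> Q"
        by (blast intro: Q)+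
      then show "?z + t *\<^sub>R j \<in> Q" "?z - y + t *\<^sub>R j \<in> Q" by simp_all
    qed
    have "\<bar>(f (?z + ?c *\<^sub>R j) - f (?z - y + ?c *\<^sub>R j)) - (f (?z + 0 *\<^sub>R j) - f (?z - y + 0 *\<^sub>R j))\<bar>
          \<le> (L * ?Y) * \<bar>?c - 0\<bar>"
    proof (rule abs_diff_le_of_deriv_bound)
      fix t assume t: "min 0 ?c \<le> t" "t \<le> max 0 ?c"
      have "\<bar>d j (?z + t *\<^sub>R j) - d j (?z - y + t *\<^sub>R j)\<bar>
            \<le> L * (\<Sum>i\<in>Basis. \<bar>((?z + t *\<^sub>R j) - (?z - y + t *\<^sub>R j)) \<bullet> i\<bar>)"
        by (intro lip j in_Q t)
      then show "((\<lambda>t. f (?z + t *\<^sub>R j) - f (?z - y + t *\<^sub>R j)) has_real_derivative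
                   d j (?z + t *\<^sub>R j) - d j (?z - y + t *\<^sub>R j)) (at t) \<and>
                 \<bar>d j (?z + t *\<^sub>R j) - d j (?z - y + t *\<^sub>R j)\<bar> \<le> L * ?Y"
        by (auto intro!: DERIV_diff der j in_Q t)
    qed
    moreover have "?m (insert j A) = ?z + ?c *\<^sub>R j"
      using coord_mix_insert[OF insert.hyps, of w "w + y"] by simp
    ultimately have "\<bar>?E (insert j A) - ?E A\<bar> \<le> L * ?Y * \<bar>?c\<bar>"
      by (simp add: algebra_simps)
    with insert.IH[OF A] insert.hyps show ?case
      by (simp add: algebra_simps)
  qed
  from this[of Basis] show ?thesis
    by (simp add: coord_mix_Basis power2_eq_square mult.assoc)
qed

lemma smooth_on_second_partials_bounded:
  assumes sm: "smooth_on f S" and K: "compact K" "K \<subseteq> S"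
  obtains B where "B \<ge> 0"
    "\<And>i k z. i \<in> Basis \<Longrightarrow> k \<in> Basis \<Longrightarrow> z \<in> K \<Longrightarrow> \<bar>iter_pderiv [i, k] f z\<bar> \<le> B"
proof -
  define G where "G z = (\<Sum>i\<in>Basis. \<Sum>k\<in>Basis. \<bar>iter_pderiv [i, k] f z\<bar>)" for z
  have "continuous_on S (iter_pderiv [i, k] f)" if "i \<in> Basis" "k \<in> Basis" for i k
    using sm that unfolding smooth_on_def by (metis empty_set empty_subsetI insert_subset list.simps(15))
  then have "continuous_on K G"
    unfolding G_def using K(2) by (auto intro!: continuous_intros intro: continuous_on_subset)
  then obtain B where B: "\<And>z. z \<in> K \<Longrightarrow> \<bar>G z\<bar> \<le> B"
    using K(1) compact_continuous_image compact_imp_bounded by (metis bounded_real imageI)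
  have "\<bar>iter_pderiv [i, k] f z\<bar> \<le> max 0 B" if "i \<in> Basis" "k \<in> Basis" "z \<in> K" for i k z
  proof -
    have "\<bar>iter_pderiv [i, k] f z\<bar> \<le> (\<Sum>k\<in>Basis. \<bar>iter_pderiv [i, k] f z\<bar>)"
      using that by (intro member_le_sum) auto
    also have "\<dots> \<le> G z" unfolding G_def using that by (intro member_le_sum) auto
    also have "\<dots> \<le> B" using B[OF that(3)] by simp
    finally show ?thesis by simp
  qed
  then show ?thesis using that[of "max 0 B"] by simp
qed

lemma sum_abs_inner_Basis_le: "(\<Sum>i\<in>Basis. \<bar>y \<bullet> i\<bar>) \<le> DIM('a) * norm (y::'a::euclidean_space)"
  using sum_mono[of Basis "\<lambda>i. \<bar>y \<bullet> i\<bar>" "\<lambda>_. norm y"] Basis_le_norm by auto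

lemma smooth_on_partials_lipschitz_cbox:
  assumes sm: "smooth_on f S" and box: "cbox a b \<subseteq> S"
  obtains B where "B \<ge> 0" "\<And>k u v. k \<in> Basis \<Longrightarrow> u \<in> cbox a b \<Longrightarrow> v \<in> cbox a b \<Longrightarrow>
      \<bar>iter_pderiv [k] f u - iter_pderiv [k] f v\<bar> \<le> B * (\<Sum>i\<in>Basis. \<bar>(u - v) \<bullet> i\<bar>)"
proof -
  obtain B where B: "B \<ge> 0"
    "\<And>i k z. i \<in> Basis \<Longrightarrow> k \<in> Basis \<Longrightarrow> z \<in> cbox a b \<Longrightarrow> \<bar>iter_pderiv [i, k] f z\<bar> \<le> B"
    using smooth_on_second_partials_bounded[OF sm compact_cbox box] by blast
  have "\<bar>iter_pderiv [k] f u - iter_pderiv [k] f v\<bar> \<le> B * (\<Sum>i\<in>Basis. \<bar>(u - v) \<bullet> i\<bar>)"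
    if "k \<in> Basis" "u \<in> cbox a b" "v \<in> cbox a b" for k u v
  proof (rule abs_diff_le_of_partials_cbox[where d="\<lambda>i. iter_pderiv [i, k] f"])
    fix z i t assume "i \<in> Basis" "z + t *\<^sub>R i \<in> cbox a b"
    then show "((\<lambda>s. iter_pderiv [k] f (z + s *\<^sub>R i)) has_real_derivative
                 iter_pderiv [i, k] f (z + t *\<^sub>R i)) (at t)"
      using smooth_on_has_real_derivative[OF sm, of "[k]" i z t] \<open>k \<in> Basis\<close> box by auto
  qed (use that B(2) in auto)
  with B(1) show ?thesis by (rule that)
qed

lemma mem_cube_iff: "z \<in> cbox (x - \<rho> *\<^sub>R One) (x + \<rho> *\<^sub>R One) \<longleftrightarrow> (\<forall>i\<in>Basis. \<bar>(z - x) \<bullet> i\<bar> \<le> \<rho>)"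
  by (auto simp: mem_box inner_diff_left inner_add_left abs_le_iff algebra_simps)

lemma cube_subset_cball:
  fixes x :: "'a::euclidean_space" and \<rho> :: real
  shows "cbox (x - \<rho> *\<^sub>R One) (x + \<rho> *\<^sub>R One) \<subseteq> cball x (DIM('a) * \<rho>)"
proof
  fix z :: 'a assume "z \<in> cbox (x - \<rho> *\<^sub>R One) (x + \<rho> *\<^sub>R One)"
  then have "(\<Sum>i\<in>Basis. \<bar>(z - x) \<bullet> i\<bar>) \<le> (\<Sum>i\<in>(Basis::'a set). \<rho>)"
    by (intro sum_mono) (simp add: mem_cube_iff)
  then have "norm (z - x) \<le> DIM('a) * \<rho>" using norm_le_l1[of "z - x"] by simp
  then show "z \<in> cball x (DIM('a) * \<rho>)" by (simp add: dist_norm norm_minus_commute)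
qed

lemma smooth_on_second_difference_local:
  fixes f :: "'a::euclidean_space \<Rightarrow> real"
  assumes sm: "smooth_on f S" and S: "open S" "x \<in> S"
  obtains r M where "r > 0" "M \<ge> 0" "cball x (2 * r) \<subseteq> S"
    "\<And>w y. w \<in> cball x r \<Longrightarrow> y \<in> cball 0 r \<Longrightarrow>
        \<bar>f (w + y) + f (w - y) - 2 * f w\<bar> \<le> M * (norm y)\<^sup>2"
proof -
  obtain e where e: "e > 0" "cball x e \<subseteq> S" using S open_contains_cball by blast
  define n where "n = real DIM('a)"
  have n: "n \<ge> 1" by (simp add: n_def DIM_positive Suc_leI)
  define \<rho> where "\<rho> = e / n"
  have \<rho>: "\<rho> > 0" "\<rho> \<le> e" using e n by (auto simp: \<rho>_def field_simps)
  define Q where "Q = cbox (x - \<rho> *\<^sub>R One) (x + \<rho> *\<^sub>R One)"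
  have "Q \<subseteq> S"
    using cube_subset_cball[of x \<rho>] e n by (simp add: Q_def \<rho>_def n_def)
  then obtain B where B: "B \<ge> 0" "\<And>k u v. k \<in> Basis \<Longrightarrow> u \<in> Q \<Longrightarrow> v \<in> Q \<Longrightarrow>
      \<bar>iter_pderiv [k] f u - iter_pderiv [k] f v\<bar> \<le> B * (\<Sum>i\<in>Basis. \<bar>(u - v) \<bullet> i\<bar>)"
    unfolding Q_def by (rule smooth_on_partials_lipschitz_cbox[OF sm]) blast
  define r where "r = \<rho> / 2"
  have "\<bar>f (w + y) + f (w - y) - 2 * f w\<bar> \<le> (B * n\<^sup>2) * (norm y)\<^sup>2"
    if w: "w \<in> cball x r" and y: "y \<in> cball 0 r" for w y
  proof -
    have "\<bar>f (w + y) + f (w - y) - 2 * f w\<bar> \<le> B * (\<Sum>i\<in>Basis. \<bar>y \<bullet> i\<bar>)\<^sup>2"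
    proof (rule second_difference_le_of_partials[where Q=Q and d="\<lambda>j. iter_pderiv [j] f"])
      fix z j t assume "(j::'a) \<in> Basis" "z + t *\<^sub>R j \<in> Q"
      then show "((\<lambda>s. f (z + s *\<^sub>R j)) has_real_derivative iter_pderiv [j] f (z + t *\<^sub>R j)) (at t)"
        using smooth_on_has_real_derivative[OF sm, of "[]"] \<open>Q \<subseteq> S\<close> by auto
    next
      fix c assume c: "\<forall>i\<in>Basis. \<bar>c \<bullet> i\<bar> \<le> \<bar>y \<bullet> i\<bar>"
      have "\<bar>(w + c - x) \<bullet> i\<bar> \<le> \<rho>" if i: "i \<in> Basis" for i
      proof -
        have "\<bar>(w - x) \<bullet> i\<bar> \<le> r"
          using Basis_le_norm[OF i, of "w - x"] w by (simp add: dist_norm norm_minus_commute)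
        moreover have "\<bar>c \<bullet> i\<bar> \<le> r"
          using c i Basis_le_norm[OF i, of y] y by force
        moreover have "(w + c - x) \<bullet> i = (w - x) \<bullet> i + c \<bullet> i"
          by (simp add: inner_diff_left inner_add_left)
        ultimately show ?thesis
          using abs_triangle_ineq[of "(w - x) \<bullet> i" "c \<bullet> i"] by (simp add: r_def)
      qed
      then show "w + c \<in> Q" by (simp add: Q_def mem_cube_iff)
    qed (rule B(2))
    also have "\<dots> \<le> B * (n * norm y)\<^sup>2"
      using sum_abs_inner_Basis_le[of y] B(1)
      by (intro mult_left_mono power_mono) (auto simp: n_def sum_nonneg)
    finally show ?thesis by (simp add: power_mult_distrib)
  qed
  moreover have "cball x (2 * r) \<subseteq> S"
    using e \<rho> by (auto simp: r_def)
  ultimately show ?thesis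
    using that[of r "B * n\<^sup>2"] \<rho> B(1) by (simp add: r_def)
qed

section \<open>Affine changes of variables\<close>

lemma integrable_lborel_affine_iff:
  fixes g :: "'a::euclidean_space \<Rightarrow> real"
  assumes c: "c \<noteq> 0" and g[measurable]: "g \<in> borel_measurable borel"
  shows "integrable lborel (\<lambda>y. g (t + c *\<^sub>R y)) \<longleftrightarrow> integrable lborel g"
proof -
  have "integrable lborel g \<longleftrightarrow>
        integrable (density (distr lborel borel (\<lambda>x. t + c *\<^sub>R x)) (\<lambda>_. \<bar>c\<bar>^DIM('a))) g"
    using lborel_affine[OF c, of t] by simp
  also have "\<dots> \<longleftrightarrow> integrable (distr lborel borel (\<lambda>x. t + c *\<^sub>R x)) (\<lambda>y. \<bar>c\<bar>^DIM('a) *\<^sub>R g y)"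
    by (subst integrable_density) auto
  also have "\<dots> \<longleftrightarrow> integrable lborel (\<lambda>y. \<bar>c\<bar>^DIM('a) *\<^sub>R g (t + c *\<^sub>R y))"
    by (subst integrable_distr_eq) auto
  also have "\<dots> \<longleftrightarrow> integrable lborel (\<lambda>y. g (t + c *\<^sub>R y))"
    using c by simp
  finally show ?thesis ..
qed

lemma integral_lborel_affine:
  fixes g :: "'a::euclidean_space \<Rightarrow> real"
  assumes c: "c \<noteq> 0" and g[measurable]: "g \<in> borel_measurable borel"
  shows "(\<integral>y. g (t + c *\<^sub>R y) \<partial>lborel) = (\<integral>y. g y \<partial>lborel) / \<bar>c\<bar>^DIM('a)"
proof -
  have "(\<integral>y. g y \<partial>lborel) =
        (\<integral>y. g y \<partial>(density (distr lborel borel (\<lambda>x. t + c *\<^sub>R x)) (\<lambda>_. \<bar>c\<bar>^DIM('a))))"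
    using lborel_affine[OF c, of t] by simp
  also have "\<dots> = (\<integral>y. \<bar>c\<bar>^DIM('a) *\<^sub>R g y \<partial>distr lborel borel (\<lambda>x. t + c *\<^sub>R x))"
    by (subst integral_density) auto
  also have "\<dots> = \<bar>c\<bar>^DIM('a) * (\<integral>y. g (t + c *\<^sub>R y) \<partial>lborel)"
    by (subst integral_distr) auto
  finally show ?thesis using c by simp
qed

lemma nn_integral_lborel_affine:
  fixes g :: "'a::euclidean_space \<Rightarrow> ennreal"
  assumes c: "c \<noteq> 0" and g[measurable]: "g \<in> borel_measurable borel"
  shows "(\<integral>\<^sup>+y. g y \<partial>lborel) = ennreal (\<bar>c\<bar>^DIM('a)) * (\<integral>\<^sup>+y. g (t + c *\<^sub>R y) \<partial>lborel)"
  by (subst lborel_affine[OF c, of t])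
     (simp add: nn_integral_density nn_integral_distr nn_integral_cmult)

lemma null_sets_lborel_affine_vimage:
  fixes N :: "'a::euclidean_space set"
  assumes c: "c \<noteq> 0" and N: "N \<in> null_sets lborel"
  shows "{y. t + c *\<^sub>R y \<in> N} \<in> null_sets lborel"
proof -
  have [measurable]: "N \<in> sets borel" using N by auto
  have M: "{y. t + c *\<^sub>R y \<in> N} \<in> sets lborel" by measurable
  then have "emeasure lborel {y. t + c *\<^sub>R y \<in> N} = (\<integral>\<^sup>+y. indicator {y. t + c *\<^sub>R y \<in> N} y \<partial>lborel)"
    by simp
  also have "\<dots> = (\<integral>\<^sup>+y. indicator N (t + c *\<^sub>R y) \<partial>lborel)"
    by (intro nn_integral_cong) (simp split: split_indicator)
  finally have "emeasure lborel N = ennreal (\<bar>c\<bar>^DIM('a)) * emeasure lborel {y. t + c *\<^sub>R y \<in> N}"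
    using nn_integral_lborel_affine[OF c, of "indicator N" t] by simp
  with N c M show ?thesis by (auto simp: null_sets_def mult_eq_0_iff)
qed

lemma integral_lebesgue_eq_lborel_AE:
  fixes f g :: "'a::euclidean_space \<Rightarrow> real"
  assumes g[measurable]: "g \<in> borel_measurable borel" and eq: "AE x in lebesgue. g x = f x"
  shows "integral\<^sup>L lebesgue f = integral\<^sup>L lborel g"
proof -
  have g': "g \<in> borel_measurable lebesgue" by (rule measurable_completion) simp
  have "f \<in> borel_measurable lebesgue" using g' eq by (rule borel_measurable_AE)
  then have "integral\<^sup>L lebesgue f = integral\<^sup>L lebesgue g"
    using g' eq by (intro integral_cong_AE) (auto elim: eventually_mono)
  also have "\<dots> = integral\<^sup>L lborel g" by (rule integral_completion) simp
  finally show ?thesis .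
qed

section \<open>Integrability of radial power kernels\<close>

lemma cball_in_borel[measurable]: "cball (c::'a::euclidean_space) e \<in> sets borel"
  by simp

definition annulus :: "real \<Rightarrow> real \<Rightarrow> 'a::euclidean_space set" where
  "annulus a b = {y. a < norm y \<and> norm y \<le> b}"

lemma annulus_borel[measurable]: "annulus a b \<in> sets borel"
  unfolding annulus_def by measurable

lemma nn_integral_norm_powr_annulus_scale:
  assumes c: "c > 0"
  shows "(\<integral>\<^sup>+y\<in>annulus (c * a) (c * b). ennreal (norm (y::'a::euclidean_space) powr -\<beta>) \<partial>lborel)
       = ennreal (c powr (real DIM('a) - \<beta>)) *
         (\<integral>\<^sup>+y\<in>annulus a b. ennreal (norm (y::'a) powr -\<beta>) \<partial>lborel)"
proof -
  have scale: "ennreal ((c * norm y) powr -\<beta>) * indicator (annulus (c * a) (c * b)) (c *\<^sub>R y)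
      = ennreal (c powr -\<beta>) * (ennreal (norm y powr -\<beta>) * indicator (annulus a b) y)" for y :: 'a
    using c by (simp add: annulus_def powr_mult ennreal_mult indicator_def)
  have "(\<integral>\<^sup>+y\<in>annulus (c * a) (c * b). ennreal (norm (y::'a) powr -\<beta>) \<partial>lborel)
      = ennreal (c ^ DIM('a)) * (\<integral>\<^sup>+(y::'a). ennreal (c powr -\<beta>) *
          (ennreal (norm y powr -\<beta>) * indicator (annulus a b) y) \<partial>lborel)"
    using nn_integral_lborel_affine[where 'a='a, of c "\<lambda>y. ennreal (norm y powr -\<beta>) * indicator (annulus (c * a) (c * b)) y" 0] c
    by (simp add: scale)
  also have "\<dots> = ennreal (c ^ DIM('a) * c powr -\<beta>) * (\<integral>\<^sup>+y\<in>annulus a b. ennreal (norm (y::'a) powr -\<beta>) \<partial>lborel)"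
    using c by (subst nn_integral_cmult) (auto simp: ennreal_mult mult.assoc)
  also have "c ^ DIM('a) * c powr -\<beta> = c powr (real DIM('a) - \<beta>)"
    using c by (simp add: powr_realpow[symmetric] powr_add[symmetric])
  finally show ?thesis .
qed

lemma nn_integral_norm_powr_annulus_finite:
  assumes a: "0 < a"
  shows "(\<integral>\<^sup>+y\<in>annulus a b. ennreal (norm (y::'a::euclidean_space) powr -\<beta>) \<partial>lborel) < \<infinity>"
proof -
  define C where "C = a powr -\<beta> + b powr -\<beta>"
  have "norm y powr -\<beta> \<le> C" if "y \<in> annulus a b" for y :: 'a
  proof (cases "-\<beta> \<ge> 0")
    case True
    then have "norm y powr -\<beta> \<le> b powr -\<beta>" using that a by (intro powr_mono2) (auto simp: annulus_def)
    then show ?thesis unfolding C_def using powr_ge_zero[of a "-\<beta>"] by linarith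
  next
    case False
    then have "norm y powr -\<beta> \<le> a powr -\<beta>" using that a by (intro powr_mono2') (auto simp: annulus_def)
    then show ?thesis unfolding C_def using powr_ge_zero[of b "-\<beta>"] by linarith
  qed
  then have "(\<integral>\<^sup>+y\<in>annulus a b. ennreal (norm (y::'a) powr -\<beta>) \<partial>lborel)
      \<le> (\<integral>\<^sup>+y. ennreal C * indicator (cball (0::'a) b) y \<partial>lborel)"
    by (intro nn_integral_mono) (auto simp: indicator_def annulus_def intro: ennreal_leI)
  also have "\<dots> = ennreal C * emeasure lborel (cball (0::'a) b)"
    by (rule nn_integral_cmult_indicator) simp
  also have "\<dots> < \<infinity>" using emeasure_lborel_cball_finite[of "0::'a" b]
    by (simp add: ennreal_mult_less_top top.not_eq_extremum)
  finally show ?thesis .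
qed

lemma integrable_norm_powr_annuli:
  fixes \<beta> :: real and A :: "'a::euclidean_space set"
  assumes a: "0 < a" and c: "\<And>k. c k > 0"
    and sm: "summable (\<lambda>k. c k powr (real DIM('a) - \<beta>))"
    and A[measurable]: "A \<in> sets borel"
    and cover: "\<And>y. y \<in> A \<Longrightarrow> \<exists>k. y \<in> annulus (c k * a) (c k * b)"
  shows "integrable lborel (\<lambda>y. indicator A y * norm (y::'a) powr (-\<beta>))"
proof -
  let ?I0 = "\<integral>\<^sup>+y\<in>annulus a b. ennreal (norm (y::'a) powr -\<beta>) \<partial>lborel"
  let ?g = "\<lambda>k y. ennreal (norm (y::'a) powr -\<beta>) * indicator (annulus (c k * a) (c k * b)) y"
  have "(\<integral>\<^sup>+ y. ennreal (norm (indicator A y * norm (y::'a) powr (-\<beta>))) \<partial>lborel)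
      \<le> (\<integral>\<^sup>+ y. (\<Sum>k. ?g k y) \<partial>lborel)"
  proof (intro nn_integral_mono)
    fix y :: 'a
    show "ennreal (norm (indicator A y * norm (y::'a) powr (-\<beta>))) \<le> (\<Sum>k. ?g k y)"
    proof (cases "y \<in> A")
      case True
      then obtain k where k: "y \<in> annulus (c k * a) (c k * b)" using cover by blast
      have "ennreal (norm (indicator A y * norm (y::'a) powr (-\<beta>))) = ?g k y"
        using True k by (auto simp: indicator_def)
      also have "\<dots> = (\<Sum>j\<in>{k}. ?g j y)"
        by (simp only: sum.insert finite.emptyI empty_iff not_False_eq_True sum.empty add_0_right)
      also have "\<dots> \<le> (\<Sum>j. ?g j y)" by (intro sum_le_suminf) auto
      finally show ?thesis .
    qed (simp add: indicator_def)
  qed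
  also have "\<dots> = (\<Sum>k. (\<integral>\<^sup>+ y. ?g k y \<partial>lborel))"
    by (rule nn_integral_suminf) measurable
  also have "\<dots> = (\<Sum>k. ennreal (c k powr (real DIM('a) - \<beta>)) * ?I0)"
    by (simp only: nn_integral_norm_powr_annulus_scale[OF c])
  also have "\<dots> = ennreal (\<Sum>k. c k powr (real DIM('a) - \<beta>)) * ?I0"
    using sm by (simp add: suminf_ennreal2 powr_ge_zero)
  also have "\<dots> < \<infinity>"
  proof -
    have "?I0 < \<infinity>" by (rule nn_integral_norm_powr_annulus_finite[OF a])
    then show ?thesis by (simp add: ennreal_mult_less_top top.not_eq_extremum)
  qed
  finally have fin: "(\<integral>\<^sup>+ y. ennreal (norm (indicator A y * norm (y::'a) powr (-\<beta>))) \<partial>lborel) < \<infinity>" .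
  have "(\<lambda>y. indicator A y * norm (y::'a) powr (-\<beta>)) \<in> borel_measurable lborel" by measurable
  then show ?thesis unfolding integrable_iff_bounded using fin by simp
qed

lemma integrable_norm_powr_cball:
  assumes \<beta>: "\<beta> < real DIM('a)" and r: "r > 0"
  shows "integrable lborel (\<lambda>y::'a::euclidean_space. indicator (cball 0 r) y * norm y powr (-\<beta>))"
proof -
  define c where "c = (\<lambda>k::nat. (1/2::real) ^ k)"
  have A: "integrable lborel (\<lambda>y::'a. indicator (cball 0 r - {0}) y * norm y powr (-\<beta>))"
  proof (rule integrable_norm_powr_annuli[where a="r/2" and b=r and c=c])
    show "0 < r / 2" using r by simp
    show "\<And>k. 0 < c k" by (simp add: c_def)
    have "(2::real) powr (- (real DIM('a) - \<beta>)) < 1"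
      using \<beta> by (intro powr_less_one) auto
    moreover have "(1/2::real) powr (real DIM('a) - \<beta>) = (2::real) powr (- (real DIM('a) - \<beta>))"
      by (simp add: powr_divide powr_minus_divide[symmetric])
    ultimately have q: "(1/2::real) powr (real DIM('a) - \<beta>) < 1" by simp
    have "summable (\<lambda>k. ((1/2::real) powr (real DIM('a) - \<beta>)) ^ k)"
      using q by (intro summable_geometric) (simp add: abs_if)
    then show "summable (\<lambda>k. c k powr (real DIM('a) - \<beta>))"
      by (simp add: c_def powr_realpow[symmetric] powr_powr powr_power mult.commute)
    show "cball 0 r - {0} \<in> sets borel" by simp
    fix y :: 'a assume y: "y \<in> cball 0 r - {0}"
    then have y0: "norm y > 0" "norm y \<le> r" by auto
    have "\<exists>k. \<not> (c k * r < norm y) \<and> (c (Suc k) * r < norm y)"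
    proof (rule exists_least_lemma)
      show "\<not> c 0 * r < norm y" using y0 by (simp add: c_def)
      obtain n where "(1/2::real) ^ n < norm y / r" using real_arch_pow_inv[of "norm y / r" "1/2"] y0 r by auto
      then show "\<exists>n. c n * r < norm y" using r by (auto simp: c_def field_simps)
    qed
    then obtain k where "\<not> (c k * r < norm y)" "c (Suc k) * r < norm y" by blast
    then have "y \<in> annulus (c k * (r / 2)) (c k * r)"
      by (auto simp: annulus_def c_def)
    then show "\<exists>k. y \<in> annulus (c k * (r / 2)) (c k * r)" by blast
  qed
  have "(\<lambda>y::'a. indicator (cball 0 r - {0}) y * norm y powr (-\<beta>)) = (\<lambda>y. indicator (cball 0 r) y * norm y powr (-\<beta>))"
    by (auto simp: indicator_def)
  with A show ?thesis by simp
qed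

lemma integrable_norm_powr_outside_cball:
  assumes s: "s > real DIM('a)" and r: "r > 0"
  shows "integrable lborel (\<lambda>y::'a::euclidean_space. indicator {y. r < norm y} y * norm y powr (-s))"
proof (rule integrable_norm_powr_annuli[where a=r and b="2*r" and c="\<lambda>k. 2 ^ k"])
  show "0 < r" using r by simp
  show "\<And>k. 0 < (2::real) ^ k" by simp
  have q: "(2::real) powr (real DIM('a) - s) < 1"
    using s by (intro powr_less_one) auto
  have "summable (\<lambda>k. ((2::real) powr (real DIM('a) - s)) ^ k)"
    using q by (intro summable_geometric) (simp add: abs_if)
  then show "summable (\<lambda>k. ((2::real) ^ k) powr (real DIM('a) - s))"
    by (simp add: powr_realpow[symmetric] powr_powr powr_power mult.commute)
  show "{y::'a. r < norm y} \<in> sets borel" by measurable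
  fix y :: 'a assume y: "y \<in> {y. r < norm y}"
  have "\<exists>k. \<not> (norm y \<le> 2 ^ k * r) \<and> (norm y \<le> 2 ^ Suc k * r)"
  proof (rule exists_least_lemma)
    show "\<not> norm y \<le> 2 ^ 0 * r" using y by simp
    obtain n where "norm y / r < (2::real) ^ n" using real_arch_pow[of 2 "norm y / r"] by auto
    then show "\<exists>n. norm y \<le> 2 ^ n * r" using r by (auto simp: field_simps intro!: exI[of _ n])
  qed
  then obtain k where "\<not> (norm y \<le> 2 ^ k * r)" "norm y \<le> 2 ^ Suc k * r" by blast
  then have "y \<in> annulus (2 ^ k * r) (2 ^ k * (2 * r))"
    by (auto simp: annulus_def mult_ac)
  then show "\<exists>k. y \<in> annulus (2 ^ k * r) (2 ^ k * (2 * r))" by blast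
qed

section \<open>Approximate identities and scaled mollifiers\<close>

lemma approximate_identity_tendsto:
  fixes k :: "real \<Rightarrow> 'a::euclidean_space \<Rightarrow> real" and g :: "'a \<Rightarrow> real"
  assumes k_nonneg: "\<And>\<epsilon> z. \<epsilon> > 0 \<Longrightarrow> k \<epsilon> z \<ge> 0"
    and k_integrable: "\<And>\<epsilon>. \<epsilon> > 0 \<Longrightarrow> integrable lborel (k \<epsilon>)"
    and k_integral: "\<And>\<epsilon>. \<epsilon> > 0 \<Longrightarrow> integral\<^sup>L lborel (k \<epsilon>) = 1"
    and k_support: "\<And>\<epsilon> z. \<epsilon> > 0 \<Longrightarrow> k \<epsilon> z \<noteq> 0 \<Longrightarrow> norm z < \<epsilon>"
    and g[measurable]: "g \<in> borel_measurable borel" and cont: "isCont g x"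
  shows "((\<lambda>\<epsilon>. \<integral>z. k \<epsilon> z * g (x - z) \<partial>lborel) \<longlongrightarrow> g x) (at_right 0)"
proof (rule tendstoI)
  fix d :: real assume "d > 0"
  have "isCont (\<lambda>z. g (x - z)) 0"
    using cont by (intro continuous_intros isCont_o2[where f="\<lambda>z. x - z" and g=g]) auto
  then obtain \<delta> where "\<delta> > 0" and \<delta>: "\<And>z. norm z < \<delta> \<Longrightarrow> \<bar>g (x - z) - g x\<bar> < d / 2"
    using \<open>d > 0\<close> unfolding continuous_at_eps_delta dist_real_def dist_norm
    by (metis diff_zero half_gt_zero)
  have close: "\<bar>(\<integral>z. k \<epsilon> z * g (x - z) \<partial>lborel) - g x\<bar> \<le> d / 2" if \<epsilon>: "0 < \<epsilon>" "\<epsilon> < \<delta>" for \<epsilon>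
  proof -
    have [measurable]: "k \<epsilon> \<in> borel_measurable borel"
      using k_integrable[OF \<epsilon>(1)] by (simp add: borel_measurable_integrable)
    have small: "\<bar>k \<epsilon> z * (g (x - z) - g x)\<bar> \<le> k \<epsilon> z * (d / 2)" for z
      using k_support[OF \<epsilon>(1), of z] \<delta>[of z] k_nonneg[OF \<epsilon>(1), of z] \<epsilon>
      by (cases "k \<epsilon> z = 0") (auto simp: abs_mult)
    have int_k: "integrable lborel (\<lambda>z. k \<epsilon> z * c)" for c
      by (intro integrable_mult_left k_integrable \<epsilon>)
    have int_diff: "integrable lborel (\<lambda>z. k \<epsilon> z * (g (x - z) - g x))"
      by (rule Bochner_Integration.integrable_bound[OF int_k, of _ "d / 2"]) (use small k_nonneg[OF \<epsilon>(1)] \<open>d > 0\<close> in \<open>auto simp: abs_mult\<close>)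
    have "(\<integral>z. k \<epsilon> z * g (x - z) \<partial>lborel) - g x
        = (\<integral>z. k \<epsilon> z * (g (x - z) - g x) + k \<epsilon> z * g x \<partial>lborel) - (\<integral>z. k \<epsilon> z * g x \<partial>lborel)"
      using k_integral[OF \<epsilon>(1)] by (simp add: algebra_simps)
    also have "\<dots> = (\<integral>z. k \<epsilon> z * (g (x - z) - g x) \<partial>lborel)"
      using int_diff int_k by simp
    moreover have "\<bar>\<integral>z. k \<epsilon> z * (g (x - z) - g x) \<partial>lborel\<bar> \<le> (\<integral>z. k \<epsilon> z * (d / 2) \<partial>lborel)"
      by (rule integral_abs_bound_integral[OF int_diff int_k small])
    ultimately have "\<bar>(\<integral>z. k \<epsilon> z * g (x - z) \<partial>lborel) - g x\<bar> \<le> (\<integral>z. k \<epsilon> z * (d / 2) \<partial>lborel)"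
      by simp
    also have "\<dots> = d / 2" using k_integral[OF \<epsilon>(1)] by simp
    finally show ?thesis .
  qed
  show "eventually (\<lambda>\<epsilon>. dist (\<integral>z. k \<epsilon> z * g (x - z) \<partial>lborel) (g x) < d) (at_right 0)"
    unfolding eventually_at_right[OF \<open>\<delta> > 0\<close>]
  proof (intro exI[of _ \<delta>] conjI allI impI)
    fix \<epsilon> :: real assume "0 < \<epsilon>" "\<epsilon> < \<delta>"
    with close[of \<epsilon>] \<open>d > 0\<close> show "dist (\<integral>z. k \<epsilon> z * g (x - z) \<partial>lborel) (g x) < d"
      by (simp add: dist_real_def)
  qed (rule \<open>\<delta> > 0\<close>)
qed

definition scaled_mollifier :: "('a::euclidean_space \<Rightarrow> real) \<Rightarrow> real \<Rightarrow> 'a \<Rightarrow> real" where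
  "scaled_mollifier \<eta> \<epsilon> z = (1 / \<epsilon> ^ DIM('a)) * \<eta> ((1 / \<epsilon>) *\<^sub>R z)"

context
  fixes \<eta> :: "'a::euclidean_space \<Rightarrow> real"
  assumes \<eta>: "std_mollifier \<eta>"
begin

lemma std_mollifier_continuous: "continuous_on UNIV \<eta>"
  using \<eta> unfolding std_mollifier_def smooth_on_def
  by (metis empty_set empty_subsetI iter_pderiv.simps(1))

lemma std_mollifier_borel[measurable]: "\<eta> \<in> borel_measurable borel"
  by (rule borel_measurable_continuous_onI[OF std_mollifier_continuous])

lemma scaled_mollifier_borel[measurable]: "scaled_mollifier \<eta> \<epsilon> \<in> borel_measurable borel"
  unfolding scaled_mollifier_def[abs_def] by measurable

lemma std_mollifier_support: "\<eta> y \<noteq> 0 \<Longrightarrow> norm y < 1"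
  using \<eta> closure_subset[of "{x. \<eta> x \<noteq> 0}"] unfolding std_mollifier_def by auto

lemma std_mollifier_bounded: "\<exists>H. \<forall>y. \<eta> y \<le> H"
proof -
  obtain H where H: "\<And>y. y \<in> cball 0 1 \<Longrightarrow> \<bar>\<eta> y\<bar> \<le> H"
    using compact_continuous_image[OF continuous_on_subset[OF std_mollifier_continuous]]
    by (metis bounded_real compact_cball compact_imp_bounded image_eqI subset_UNIV)
  have "\<eta> y \<le> max 0 H" for y
    using H[of y] std_mollifier_support[of y] by (cases "\<eta> y = 0") auto
  then show ?thesis by blast
qed

lemma std_mollifier_integrable: "integrable lborel \<eta>"
  and std_mollifier_integral: "integral\<^sup>L lborel \<eta> = 1"
proof -
  have "integral\<^sup>L lebesgue \<eta> = 1" using \<eta> by (simp add: std_mollifier_def)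
  moreover from this have "integrable lebesgue \<eta>"
    using not_integrable_integral_eq by fastforce
  ultimately show "integrable lborel \<eta>" "integral\<^sup>L lborel \<eta> = 1"
    by (simp_all add: integral_completion integrable_completion)
qed

lemma scaled_mollifier_nonneg: "\<epsilon> > 0 \<Longrightarrow> scaled_mollifier \<eta> \<epsilon> z \<ge> 0"
  using \<eta> by (simp add: scaled_mollifier_def std_mollifier_def)

lemma scaled_mollifier_support: "\<epsilon> > 0 \<Longrightarrow> scaled_mollifier \<eta> \<epsilon> z \<noteq> 0 \<Longrightarrow> norm z < \<epsilon>"
  using std_mollifier_support[of "(1 / \<epsilon>) *\<^sub>R z"] by (auto simp: scaled_mollifier_def field_simps)

lemma scaled_mollifier_integrable: "\<epsilon> > 0 \<Longrightarrow> integrable lborel (scaled_mollifier \<eta> \<epsilon>)"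
  using integrable_lborel_affine_iff[of "1 / \<epsilon>" \<eta> 0] std_mollifier_integrable
  unfolding scaled_mollifier_def[abs_def] by (intro integrable_mult_right) simp

lemma scaled_mollifier_integral: "\<epsilon> > 0 \<Longrightarrow> integral\<^sup>L lborel (scaled_mollifier \<eta> \<epsilon>) = 1"
  using integral_lborel_affine[of "1 / \<epsilon>" \<eta> 0] std_mollifier_integral
  unfolding scaled_mollifier_def[abs_def] by (simp add: power_one_over)

end

section \<open>The singular integral near a smooth point\<close>

locale frac_lap_setting =
  fixes \<alpha> :: real and \<Lambda> :: "'a::euclidean_space set" and f :: "'a \<Rightarrow> real"
  assumes \<alpha>_pos: "0 < \<alpha>" and \<alpha>_less_1: "\<alpha> < 1"
    and \<Lambda>_closed: "closed \<Lambda>" and \<Lambda>_null: "\<Lambda> \<in> null_sets lebesgue"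
    and f_L2alpha: "f \<in> L2alpha \<alpha>" and f_smooth: "smooth_on f (- \<Lambda>)"
begin

definition \<sigma> :: real where "\<sigma> = real DIM('a) + 2 * \<alpha>"

text \<open>f0 agrees with f off the null set \<Lambda> and, unlike f, is Borel measurable.\<close>
definition f0 :: "'a \<Rightarrow> real" where "f0 u = (if u \<in> \<Lambda> then 0 else f u)"

definition weight :: "'a \<Rightarrow> real" where "weight u = 1 + norm u powr \<sigma>"

lemma \<sigma>_greater_DIM: "\<sigma> > real DIM('a)"
  using \<alpha>_pos by (simp add: \<sigma>_def)

lemma \<sigma>_minus_2_less_DIM: "\<sigma> - 2 < real DIM('a)"
  using \<alpha>_less_1 by (simp add: \<sigma>_def)

lemma \<sigma>_pos: "\<sigma> > 0"
  using \<sigma>_greater_DIM by linarith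

lemma weight_pos: "weight u > 0"
  by (simp add: weight_def add_pos_nonneg)

lemma weight_borel[measurable]: "weight \<in> borel_measurable borel"
  unfolding weight_def[abs_def] by measurable

lemma \<Lambda>_borel[measurable]: "\<Lambda> \<in> sets borel"
  using \<Lambda>_closed by (simp add: borel_closed)

lemma \<Lambda>_null_lborel: "\<Lambda> \<in> null_sets lborel"
  using \<Lambda>_null by (simp add: null_sets_completion_iff)

lemma f_continuous_on: "continuous_on (- \<Lambda>) f"
  using f_smooth unfolding smooth_on_def by (metis empty_set empty_subsetI iter_pderiv.simps(1))

lemma f0_borel[measurable]: "f0 \<in> borel_measurable borel"
  unfolding f0_def[abs_def]
  by (rule borel_measurable_continuous_on_if) (auto intro: f_continuous_on)

lemma f0_isCont: "p \<notin> \<Lambda> \<Longrightarrow> isCont f0 p"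
proof -
  have "continuous_on (- \<Lambda>) f0"
    using f_continuous_on by (rule continuous_on_eq) (simp add: f0_def)
  then show "p \<notin> \<Lambda> \<Longrightarrow> isCont f0 p"
    using \<Lambda>_closed by (simp add: continuous_on_eq_continuous_at open_Compl)
qed

lemma integrable_f0_weight: "integrable lborel (\<lambda>u. \<bar>f0 u\<bar> / weight u)"
proof -
  have "integrable lebesgue (\<lambda>u. \<bar>f u\<bar> / (1 + norm u powr (real DIM('a) + 2 * \<alpha>)))"
    using f_L2alpha by (simp add: L2alpha_def)
  moreover have "(\<lambda>u. \<bar>f0 u\<bar> / weight u) \<in> borel_measurable lebesgue"
    by (rule measurable_completion) measurable
  ultimately have "integrable lebesgue (\<lambda>u. \<bar>f0 u\<bar> / weight u)"
    by (rule integrable_cong_AE_imp)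
       (use AE_not_in[OF \<Lambda>_null] in \<open>auto elim!: eventually_mono simp: f0_def weight_def \<sigma>_def\<close>)
  then show ?thesis by (simp add: integrable_completion)
qed

lemma AE_f0_affine_eq:
  assumes "c \<noteq> 0" shows "AE y in lebesgue. f0 (t + c *\<^sub>R y) = f (t + c *\<^sub>R y)"
proof -
  have "AE y in lborel. t + c *\<^sub>R y \<notin> \<Lambda>"
    using AE_not_in[OF null_sets_lborel_affine_vimage[OF assms \<Lambda>_null_lborel]] by simp
  then have "AE y in lebesgue. t + c *\<^sub>R y \<notin> \<Lambda>" by (rule AE_completion)
  then show ?thesis by eventually_elim (simp add: f0_def)
qed

lemma mollify_eq_f0_conv:
  assumes "\<epsilon> > 0" "std_mollifier \<eta>"
  shows "mollify \<eta> \<epsilon> f u = (\<integral>z. f0 (u - z) * scaled_mollifier \<eta> \<epsilon> z \<partial>lborel)"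
proof -
  have "AE z in lebesgue. f0 (u - z) * scaled_mollifier \<eta> \<epsilon> z = f (u - z) * scaled_mollifier \<eta> \<epsilon> z"
    using AE_f0_affine_eq[of "-1" u] by (auto elim!: eventually_mono)
  moreover have [measurable]: "scaled_mollifier \<eta> \<epsilon> \<in> borel_measurable borel"
    using assms(2) by (rule scaled_mollifier_borel)
  ultimately show ?thesis
    unfolding mollify_def scaled_mollifier_def[symmetric]
    by (intro integral_lebesgue_eq_lborel_AE) measurable
qed

lemma integrable_f0_conv_mollifier:
  assumes \<epsilon>: "\<epsilon> > 0" and \<eta>: "std_mollifier \<eta>"
  shows "integrable lborel (\<lambda>z. f0 (v - z) * scaled_mollifier \<eta> \<epsilon> z)"
proof -
  obtain H where H: "\<And>y. \<eta> y \<le> H" using std_mollifier_bounded[OF \<eta>] by blast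
  define K where "K = H / \<epsilon> ^ DIM('a) * (1 + (norm v + \<epsilon>) powr \<sigma>)"
  have "0 \<le> H" using H[of 0] \<eta> by (auto simp: std_mollifier_def intro: order_trans)
  then have "K \<ge> 0" using \<epsilon> by (simp add: K_def)
  have bound: "\<bar>f0 (v - z) * scaled_mollifier \<eta> \<epsilon> z\<bar> \<le> K * (\<bar>f0 (v - z)\<bar> / weight (v - z))" for z
  proof (cases "scaled_mollifier \<eta> \<epsilon> z = 0")
    case True
    then show ?thesis using \<open>K \<ge> 0\<close> weight_pos[of "v - z"] by simp
  next
    case False
    have "norm (v - z) \<le> norm v + \<epsilon>"
      using scaled_mollifier_support[OF \<eta> \<epsilon> False] norm_triangle_ineq4[of v z] by simp
    then have "weight (v - z) \<le> 1 + (norm v + \<epsilon>) powr \<sigma>"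
      using \<sigma>_pos by (simp add: weight_def powr_mono2)
    then have "weight (v - z) * (\<bar>f0 (v - z)\<bar> / weight (v - z))
        \<le> (1 + (norm v + \<epsilon>) powr \<sigma>) * (\<bar>f0 (v - z)\<bar> / weight (v - z))"
      using weight_pos[of "v - z"] by (intro mult_right_mono) auto
    then have "\<bar>f0 (v - z)\<bar> \<le> (1 + (norm v + \<epsilon>) powr \<sigma>) * (\<bar>f0 (v - z)\<bar> / weight (v - z))"
      using weight_pos[of "v - z"] by simp
    moreover have "scaled_mollifier \<eta> \<epsilon> z \<le> H / \<epsilon> ^ DIM('a)"
      using H[of "(1 / \<epsilon>) *\<^sub>R z"] \<epsilon> by (simp add: scaled_mollifier_def divide_right_mono)
    ultimately have "\<bar>f0 (v - z)\<bar> * scaled_mollifier \<eta> \<epsilon> z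
        \<le> ((1 + (norm v + \<epsilon>) powr \<sigma>) * (\<bar>f0 (v - z)\<bar> / weight (v - z))) * (H / \<epsilon> ^ DIM('a))"
      using scaled_mollifier_nonneg[OF \<eta> \<epsilon>, of z] by (intro mult_mono) auto
    then show ?thesis
      using scaled_mollifier_nonneg[OF \<eta> \<epsilon>, of z] by (simp add: K_def abs_mult mult_ac)
  qed
  have "integrable lborel (\<lambda>z. K * (\<bar>f0 (v - z)\<bar> / weight (v - z)))"
    using integrable_lborel_affine_iff[of "-1" "\<lambda>u. \<bar>f0 u\<bar> / weight u" v] integrable_f0_weight
    by (intro integrable_mult_right) simp
  then show ?thesis
  proof (rule Bochner_Integration.integrable_bound)
    show "AE z in lborel. norm (f0 (v - z) * scaled_mollifier \<eta> \<epsilon> z)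
        \<le> norm (K * (\<bar>f0 (v - z)\<bar> / weight (v - z)))"
      using bound \<open>K \<ge> 0\<close> by (intro AE_I2) (simp add: abs_mult weight_pos abs_of_pos)
  qed (use scaled_mollifier_borel[OF \<eta>] in measurable)
qed

end

locale frac_lap_local = frac_lap_setting +
  fixes x :: 'a and r M F :: real
  assumes r_pos: "r > 0" and M_nonneg: "M \<ge> 0"
    and cball_avoids_\<Lambda>: "cball x (2 * r) \<subseteq> - \<Lambda>"
    and second_difference_le: "\<And>w y. w \<in> cball x r \<Longrightarrow> y \<in> cball 0 r \<Longrightarrow>
        \<bar>f (w + y) + f (w - y) - 2 * f w\<bar> \<le> M * (norm y)\<^sup>2"
    and f_bounded: "\<And>w. w \<in> cball x r \<Longrightarrow> \<bar>f w\<bar> \<le> F"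
begin

definition C_tail :: real where
  "C_tail = r powr (- \<sigma>) + (1 + (norm x + r) / r) powr \<sigma>"

lemma C_tail_pos: "C_tail > 0"
  using r_pos by (simp add: C_tail_def add_pos_nonneg)

lemma F_nonneg: "F \<ge> 0"
  using f_bounded[of x] r_pos by auto

lemma cball_notin_\<Lambda>: "w \<in> cball x (2 * r) \<Longrightarrow> w \<notin> \<Lambda>"
  using cball_avoids_\<Lambda> by auto

lemma cball_r_notin_\<Lambda>: "w \<in> cball x r \<Longrightarrow> w \<notin> \<Lambda>"
  using cball_notin_\<Lambda> r_pos by auto

lemma norm_powr_le_weight:
  assumes w: "w \<in> cball x r" and v: "r < norm v"
  shows "norm v powr (- \<sigma>) \<le> C_tail / weight (w + v)"
proof -
  define \<kappa> where "\<kappa> = 1 + (norm x + r) / r"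
  have \<kappa>: "\<kappa> > 0" using r_pos by (simp add: \<kappa>_def add_pos_nonneg)
  have v0: "norm v > 0" using v r_pos by linarith
  have "norm w \<le> norm x + r"
    using w norm_triangle_ineq2[of w x] by (auto simp: dist_norm norm_minus_commute)
  moreover have "norm x + r \<le> (norm x + r) / r * norm v"
    using v r_pos mult_left_mono[of r "norm v" "(norm x + r) / r"] by simp
  ultimately have "norm (w + v) \<le> \<kappa> * norm v"
    using norm_triangle_ineq[of w v] by (simp add: \<kappa>_def algebra_simps)
  then have "norm (w + v) powr \<sigma> * norm v powr (- \<sigma>) \<le> (\<kappa> * norm v) powr \<sigma> * norm v powr (- \<sigma>)"
    using \<sigma>_pos by (intro mult_right_mono powr_mono2) auto
  also have "\<dots> = \<kappa> powr \<sigma>"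
    using \<kappa> v0 by (simp add: powr_mult powr_add[symmetric])
  finally have "weight (w + v) * norm v powr (- \<sigma>) \<le> C_tail"
    using powr_mono2'[of "- \<sigma>" r "norm v"] v r_pos \<sigma>_pos
    by (simp add: weight_def C_tail_def \<kappa>_def algebra_simps)
  then show ?thesis using weight_pos[of "w + v"] by (simp add: field_simps)
qed

definition sdq :: "'a \<Rightarrow> 'a \<Rightarrow> real" where
  "sdq w y = (f0 (w + y) + f0 (w - y) - 2 * f0 w) / norm y powr \<sigma>"

definition near_kernel :: "'a \<Rightarrow> real" where
  "near_kernel y = indicator (cball 0 r) y * norm y powr (- (\<sigma> - 2))"

definition tail_kernel :: "'a \<Rightarrow> real" where
  "tail_kernel y = indicator {y. r < norm y} y * norm y powr (- \<sigma>)"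

lemma sdq_borel[measurable]: "(\<lambda>p. sdq (fst p) (snd p)) \<in> borel_measurable (lborel \<Otimes>\<^sub>M lborel)"
  unfolding sdq_def by measurable

lemma sdq_borel'[measurable]: "sdq w \<in> borel_measurable borel"
  unfolding sdq_def by measurable

lemma near_kernel_borel[measurable]: "near_kernel \<in> borel_measurable borel"
  unfolding near_kernel_def[abs_def] by measurable

lemma tail_kernel_borel[measurable]: "tail_kernel \<in> borel_measurable borel"
  unfolding tail_kernel_def[abs_def] by measurable

lemma near_kernel_nonneg: "near_kernel y \<ge> 0" and tail_kernel_nonneg: "tail_kernel y \<ge> 0"
  by (simp_all add: near_kernel_def tail_kernel_def)

lemma integrable_near_kernel: "integrable lborel near_kernel"
  unfolding near_kernel_def[abs_def] by (rule integrable_norm_powr_cball[OF \<sigma>_minus_2_less_DIM r_pos])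

lemma integrable_tail_kernel: "integrable lborel tail_kernel"
  unfolding tail_kernel_def[abs_def] by (rule integrable_norm_powr_outside_cball[OF \<sigma>_greater_DIM r_pos])

lemma sdq_near_le:
  assumes w: "w \<in> cball x r" and y: "norm y \<le> r"
  shows "\<bar>sdq w y\<bar> \<le> M * norm y powr (- (\<sigma> - 2))"
proof (cases "y = 0")
  case True then show ?thesis by (simp add: sdq_def)
next
  case False
  have "w + y \<in> cball x (2 * r)" "w - y \<in> cball x (2 * r)"
    using w y dist_triangle[of x "w + y" w] dist_triangle[of x "w - y" w] by (auto simp: dist_norm)
  then have "\<bar>sdq w y\<bar> = \<bar>f (w + y) + f (w - y) - 2 * f w\<bar> / norm y powr \<sigma>"
    using cball_notin_\<Lambda> cball_r_notin_\<Lambda>[OF w] by (simp add: sdq_def f0_def)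
  also have "\<dots> \<le> M * norm y powr 2 / norm y powr \<sigma>"
    using second_difference_le[OF w] y False by (intro divide_right_mono) (auto simp: powr_numeral)
  also have "\<dots> = M * norm y powr (- (\<sigma> - 2))"
    by (simp add: powr_diff)
  finally show ?thesis .
qed

definition majorant :: "'a \<Rightarrow> 'a \<Rightarrow> real" where
  "majorant w y = M * near_kernel y + C_tail * (\<bar>f0 (w + y)\<bar> / weight (w + y))
     + C_tail * (\<bar>f0 (w - y)\<bar> / weight (w - y)) + 2 * F * tail_kernel y"

lemma majorant_nonneg: "majorant w y \<ge> 0"
  unfolding majorant_def using M_nonneg C_tail_pos F_nonneg weight_pos near_kernel_nonneg tail_kernel_nonneg
  by (intro add_nonneg_nonneg mult_nonneg_nonneg divide_nonneg_pos) auto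

lemma abs_sdq_le_majorant:
  assumes w: "w \<in> cball x r"
  shows "\<bar>sdq w y\<bar> \<le> majorant w y"
proof (cases "norm y \<le> r")
  case True
  then have "\<bar>sdq w y\<bar> \<le> M * near_kernel y"
    using sdq_near_le[OF w] by (simp add: near_kernel_def)
  moreover have "0 \<le> C_tail * (\<bar>f0 (w + y)\<bar> / weight (w + y)) + C_tail * (\<bar>f0 (w - y)\<bar> / weight (w - y))"
    using C_tail_pos weight_pos by (intro add_nonneg_nonneg mult_nonneg_nonneg divide_nonneg_pos) auto
  moreover have "tail_kernel y = 0" using True by (simp add: tail_kernel_def)
  ultimately show ?thesis by (simp add: majorant_def)
next
  case False
  then have y: "r < norm y" by simp
  have "\<bar>f0 w\<bar> \<le> F" using f_bounded[OF w] cball_r_notin_\<Lambda>[OF w] by (simp add: f0_def)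
  moreover have "norm y powr (- \<sigma>) \<le> C_tail / weight (w + y)" "norm y powr (- \<sigma>) \<le> C_tail / weight (w - y)"
    using norm_powr_le_weight[OF w, of y] norm_powr_le_weight[OF w, of "- y"] y by simp_all
  ultimately have "(\<bar>f0 (w + y)\<bar> + \<bar>f0 (w - y)\<bar> + 2 * \<bar>f0 w\<bar>) * norm y powr (- \<sigma>)
      \<le> \<bar>f0 (w + y)\<bar> * (C_tail / weight (w + y)) + \<bar>f0 (w - y)\<bar> * (C_tail / weight (w - y))
        + 2 * F * norm y powr (- \<sigma>)"
    unfolding distrib_right by (intro add_mono mult_left_mono mult_right_mono) auto
  moreover have "\<bar>sdq w y\<bar> \<le> (\<bar>f0 (w + y)\<bar> + \<bar>f0 (w - y)\<bar> + 2 * \<bar>f0 w\<bar>) * norm y powr (- \<sigma>)"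
    by (auto simp: sdq_def powr_minus_divide abs_mult divide_inverse intro!: mult_right_mono)
  ultimately show ?thesis
    using y by (simp add: majorant_def near_kernel_def tail_kernel_def mult_ac)
qed

lemma integrable_f0_weight_shift:
  "c \<noteq> 0 \<Longrightarrow> integrable lborel (\<lambda>y. \<bar>f0 (w + c *\<^sub>R y)\<bar> / weight (w + c *\<^sub>R y))"
  using integrable_lborel_affine_iff[of c "\<lambda>u. \<bar>f0 u\<bar> / weight u" w] integrable_f0_weight by simp

lemma integral_f0_weight_shift:
  "c \<in> {-1, 1} \<Longrightarrow> (\<integral>y. \<bar>f0 (w + c *\<^sub>R y)\<bar> / weight (w + c *\<^sub>R y) \<partial>lborel)
                     = (\<integral>u. \<bar>f0 u\<bar> / weight u \<partial>lborel)"
  using integral_lborel_affine[of c "\<lambda>u. \<bar>f0 u\<bar> / weight u" w] by auto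

definition majorant_bound :: real where
  "majorant_bound = M * (\<integral>y. near_kernel y \<partial>lborel)
     + 2 * C_tail * (\<integral>u. \<bar>f0 u\<bar> / weight u \<partial>lborel) + 2 * F * (\<integral>y. tail_kernel y \<partial>lborel)"

lemma integrable_majorant: "integrable lborel (majorant w)"
  and integral_majorant: "(\<integral>y. majorant w y \<partial>lborel) = majorant_bound"
proof -
  note ints = integrable_near_kernel integrable_tail_kernel
    integrable_f0_weight_shift[of 1 w] integrable_f0_weight_shift[of "-1" w]
  show "integrable lborel (majorant w)"
    unfolding majorant_def[abs_def] using ints
    by (intro Bochner_Integration.integrable_add integrable_mult_right) simp_all
  show "(\<integral>y. majorant w y \<partial>lborel) = majorant_bound"
    using ints integral_f0_weight_shift[of 1 w] integral_f0_weight_shift[of "-1" w]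
    by (simp add: majorant_def majorant_bound_def del: times_divide_eq_right)
qed

lemma integrable_sdq: "w \<in> cball x r \<Longrightarrow> integrable lborel (sdq w)"
  using abs_sdq_le_majorant majorant_nonneg
  by (intro Bochner_Integration.integrable_bound[OF integrable_majorant]) auto

lemma integral_abs_sdq_le: "w \<in> cball x r \<Longrightarrow> (\<integral>y. \<bar>sdq w y\<bar> \<partial>lborel) \<le> majorant_bound"
  using integral_mono[of lborel "\<lambda>y. \<bar>sdq w y\<bar>" "majorant w"]
    integrable_sdq integrable_majorant abs_sdq_le_majorant integral_majorant
  by auto

lemma majorant_bound_nonneg: "majorant_bound \<ge> 0"
proof -
  have "0 \<le> (\<integral>y. \<bar>sdq x y\<bar> \<partial>lborel)" by (rule integral_nonneg_AE) auto
  moreover have "x \<in> cball x r" using r_pos by simp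
  ultimately show ?thesis using integral_abs_sdq_le[of x] by linarith
qed

definition Phi :: "'a \<Rightarrow> real" where "Phi w = (\<integral>y. sdq w y \<partial>lborel)"

text \<open>Substituting u = w + y turns the tail part of Phi into a convolution in which only the
  (almost everywhere continuous) kernel depends on w, whereas f0 itself may be discontinuous.\<close>
definition tail_conv :: "'a \<Rightarrow> real" where
  "tail_conv w = (\<integral>u. f0 u * tail_kernel (u - w) \<partial>lborel)"

lemma tail_kernel_minus[simp]: "tail_kernel (- y) = tail_kernel y"
  by (simp add: tail_kernel_def indicator_def)

lemma tail_kernel_isCont: "norm v \<noteq> r \<Longrightarrow> isCont tail_kernel v"
proof (cases "norm v < r")
  case True
  have "eventually (\<lambda>z. z \<in> ball 0 r) (nhds v)"
    using True by (intro eventually_nhds_in_open) auto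
  then have "eventually (\<lambda>z. tail_kernel z = 0) (nhds v)"
    by eventually_elim (auto simp: tail_kernel_def)
  from isCont_cong[OF this] show ?thesis by simp
next
  case False
  moreover assume "norm v \<noteq> r"
  ultimately have v: "r < norm v" by simp
  have "open {z::'a. r < norm z}" by (intro open_Collect_less continuous_intros)
  then have "eventually (\<lambda>z. z \<in> {z::'a. r < norm z}) (nhds v)"
    using v by (intro eventually_nhds_in_open) auto
  then have "eventually (\<lambda>z. tail_kernel z = norm z powr (- \<sigma>)) (nhds v)"
    by eventually_elim (simp add: tail_kernel_def)
  moreover have "isCont (\<lambda>z::'a. norm z powr (- \<sigma>)) v"
    using v r_pos by (intro continuous_intros) auto
  ultimately show ?thesis using isCont_cong by metis
qed

lemma tail_conv_integrand_le:
  assumes w: "w \<in> cball x r"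
  shows "\<bar>f0 u * tail_kernel (u - w)\<bar> \<le> C_tail * (\<bar>f0 u\<bar> / weight u)"
proof (cases "r < norm (u - w)")
  case True
  then have "tail_kernel (u - w) \<le> C_tail / weight u"
    using norm_powr_le_weight[OF w True] by (simp add: tail_kernel_def)
  have "\<bar>f0 u * tail_kernel (u - w)\<bar> = \<bar>f0 u\<bar> * tail_kernel (u - w)"
    using tail_kernel_nonneg[of "u - w"] by (simp add: abs_mult)
  also have "\<dots> \<le> \<bar>f0 u\<bar> * (C_tail / weight u)"
    using \<open>tail_kernel (u - w) \<le> C_tail / weight u\<close> by (rule mult_left_mono) simp
  finally show ?thesis by (simp add: ac_simps)
next
  case False
  then show ?thesis using C_tail_pos weight_pos[of u] by (simp add: tail_kernel_def)
qed

lemma integrable_tail_conv_integrand: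
  "w \<in> cball x r \<Longrightarrow> integrable lborel (\<lambda>u. f0 u * tail_kernel (u - w))"
proof (rule Bochner_Integration.integrable_bound[OF integrable_mult_right[OF integrable_f0_weight]])
  assume "w \<in> cball x r"
  show "AE u in lborel. norm (f0 u * tail_kernel (u - w)) \<le> norm (C_tail * (\<bar>f0 u\<bar> / weight u))"
    using tail_conv_integrand_le[OF \<open>w \<in> cball x r\<close>] C_tail_pos weight_pos
    by (intro AE_I2) (simp add: abs_mult weight_pos abs_of_pos)
qed measurable

lemma tail_conv_shift:
  assumes w: "w \<in> cball x r" and c: "c \<in> {-1, 1}"
  shows "integrable lborel (\<lambda>y. f0 (w + c *\<^sub>R y) * tail_kernel y)"
    and "(\<integral>y. f0 (w + c *\<^sub>R y) * tail_kernel y \<partial>lborel) = tail_conv w"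
proof -
  have [measurable]: "(\<lambda>u. f0 u * tail_kernel (u - w)) \<in> borel_measurable borel" by measurable
  have "c \<noteq> 0" "tail_kernel (c *\<^sub>R y) = tail_kernel y" for y using c by auto
  then show "integrable lborel (\<lambda>y. f0 (w + c *\<^sub>R y) * tail_kernel y)"
    "(\<integral>y. f0 (w + c *\<^sub>R y) * tail_kernel y \<partial>lborel) = tail_conv w"
    using integrable_lborel_affine_iff[of c "\<lambda>u. f0 u * tail_kernel (u - w)" w]
      integral_lborel_affine[of c "\<lambda>u. f0 u * tail_kernel (u - w)" w]
      integrable_tail_conv_integrand[OF w] c
    by (auto simp: tail_conv_def)
qed

lemma Phi_split:
  assumes w: "w \<in> cball x r"
  shows "Phi w = (\<integral>y. sdq w y * indicator (cball 0 r) y \<partial>lborel)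
                 + 2 * tail_conv w - 2 * f0 w * (\<integral>y. tail_kernel y \<partial>lborel)"
proof -
  have split: "sdq w y = sdq w y * indicator (cball 0 r) y
      + (f0 (w + y) * tail_kernel y + f0 (w - y) * tail_kernel y - 2 * f0 w * tail_kernel y)" for y
    by (cases "norm y \<le> r")
       (simp_all add: tail_kernel_def sdq_def powr_minus_divide add_divide_distrib diff_divide_distrib)
  have "integrable lborel (\<lambda>y. sdq w y * indicator (cball 0 r) y)"
  proof (rule Bochner_Integration.integrable_bound[OF integrable_mult_right[OF integrable_near_kernel]])
    show "AE y in lborel. norm (sdq w y * indicator (cball 0 r) y) \<le> norm (M * near_kernel y)"
      using sdq_near_le[OF w] M_nonneg near_kernel_nonneg
      by (intro AE_I2) (auto simp: near_kernel_def indicator_def abs_mult)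
  qed measurable
  moreover have "Phi w = (\<integral>y. sdq w y * indicator (cball 0 r) y
      + (f0 (w + y) * tail_kernel y + f0 (w - y) * tail_kernel y - 2 * f0 w * tail_kernel y) \<partial>lborel)"
    unfolding Phi_def by (rule arg_cong[where f="integral\<^sup>L lborel"]) (rule ext, rule split)
  ultimately show ?thesis
    using tail_conv_shift[OF w, of 1] tail_conv_shift[OF w, of "-1"] integrable_tail_kernel by simp
qed

lemma tendsto_near_part:
  assumes u: "\<And>n. u n \<in> cball x r" and lim: "u \<longlonglongrightarrow> x"
  shows "(\<lambda>n. \<integral>y. sdq (u n) y * indicator (cball 0 r) y \<partial>lborel)
           \<longlonglongrightarrow> (\<integral>y. sdq x y * indicator (cball 0 r) y \<partial>lborel)"
proof (rule integral_dominated_convergence[where w="\<lambda>y. M * near_kernel y"])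
  show "integrable lborel (\<lambda>y. M * near_kernel y)"
    by (intro integrable_mult_right integrable_near_kernel)
  show "AE y in lborel. (\<lambda>n. sdq (u n) y * indicator (cball 0 r) y)
                        \<longlonglongrightarrow> sdq x y * indicator (cball 0 r) y"
  proof (intro AE_I2)
    fix y :: 'a
    show "(\<lambda>n. sdq (u n) y * indicator (cball 0 r) y) \<longlonglongrightarrow> sdq x y * indicator (cball 0 r) y"
    proof (cases "norm y \<le> r")
      case True
      then have "x + y \<notin> \<Lambda>" "x - y \<notin> \<Lambda>" "x \<notin> \<Lambda>"
        using r_pos by (auto intro!: cball_notin_\<Lambda> simp: dist_norm)
      then have "(\<lambda>n. f0 (u n + y)) \<longlonglongrightarrow> f0 (x + y)" "(\<lambda>n. f0 (u n - y)) \<longlonglongrightarrow> f0 (x - y)"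
          "(\<lambda>n. f0 (u n)) \<longlonglongrightarrow> f0 x"
        by (auto intro!: isCont_tendsto_compose[OF f0_isCont] tendsto_intros lim)
      then show ?thesis
        unfolding sdq_def divide_inverse by (intro tendsto_intros)
    qed (simp add: indicator_def)
  qed
  show "AE y in lborel. norm (sdq (u n) y * indicator (cball 0 r) y) \<le> M * near_kernel y" for n
    using sdq_near_le[OF u] near_kernel_nonneg M_nonneg
    by (intro AE_I2) (auto simp: near_kernel_def indicator_def)
qed measurable

lemma tendsto_tail_conv:
  assumes u: "\<And>n. u n \<in> cball x r" and lim: "u \<longlonglongrightarrow> x"
  shows "(\<lambda>n. tail_conv (u n)) \<longlonglongrightarrow> tail_conv x"
  unfolding tail_conv_def
proof (rule integral_dominated_convergence[where w="\<lambda>v. C_tail * (\<bar>f0 v\<bar> / weight v)"])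
  show "integrable lborel (\<lambda>v. C_tail * (\<bar>f0 v\<bar> / weight v))"
    by (intro integrable_mult_right integrable_f0_weight)
  have "sphere x r \<in> null_sets lborel"
    using negligible_sphere[of x r] by (simp add: negligible_iff_null_sets null_sets_completion_iff)
  then show "AE v in lborel. (\<lambda>n. f0 v * tail_kernel (v - u n)) \<longlonglongrightarrow> f0 v * tail_kernel (v - x)"
  proof (rule AE_not_in[THEN eventually_mono])
    fix v assume "v \<notin> sphere x r"
    then have "norm (v - x) \<noteq> r" by (simp add: dist_norm norm_minus_commute)
    then show "(\<lambda>n. f0 v * tail_kernel (v - u n)) \<longlonglongrightarrow> f0 v * tail_kernel (v - x)"
      by (intro tendsto_intros isCont_tendsto_compose[OF tail_kernel_isCont] lim)
  qed
  show "AE v in lborel. norm (f0 v * tail_kernel (v - u n)) \<le> C_tail * (\<bar>f0 v\<bar> / weight v)" for n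
    using tail_conv_integrand_le[OF u] by (intro AE_I2) simp
qed measurable

lemma Phi_isCont: "isCont Phi x"
proof -
  have "continuous (at x within cball x r) Phi"
    unfolding continuous_within_sequentially comp_def
  proof (intro allI impI, elim conjE)
    fix u assume u: "\<forall>n. u n \<in> cball x r" and lim: "u \<longlonglongrightarrow> x"
    have "x \<in> cball x r" using r_pos by simp
    moreover have "(\<lambda>n. f0 (u n)) \<longlonglongrightarrow> f0 x"
      using cball_r_notin_\<Lambda>[OF \<open>x \<in> cball x r\<close>] by (intro isCont_tendsto_compose[OF f0_isCont] lim)
    ultimately show "(\<lambda>n. Phi (u n)) \<longlonglongrightarrow> Phi x"
      using u Phi_split tendsto_near_part[OF _ lim] tendsto_tail_conv[OF _ lim]
      by (simp add: Phi_split) (intro tendsto_intros; simp)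
  qed
  then show ?thesis
    using at_within_interior[of x "cball x r"] r_pos by simp
qed

lemma Phi_borel[measurable]: "Phi \<in> borel_measurable borel"
  unfolding Phi_def[abs_def]
  by (rule lborel.borel_measurable_lebesgue_integral[where f="\<lambda>w y. sdq w y", simplified]) measurable

lemma frac_lap_eq_Phi: "frac_lap \<alpha> f x = - frac_const DIM('a) \<alpha> * Phi x"
proof -
  have "x \<notin> \<Lambda>" using r_pos by (intro cball_r_notin_\<Lambda>) simp
  moreover have "AE y in lebesgue. f0 (x + y) = f (x + y)" "AE y in lebesgue. f0 (x - y) = f (x - y)"
    using AE_f0_affine_eq[of 1 x] AE_f0_affine_eq[of "-1" x] by simp_all
  ultimately have "AE y in lebesgue. sdq x y
      = (f (x + y) + f (x - y) - 2 * f x) / norm y powr (real DIM('a) + 2 * \<alpha>)"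
    by (auto elim!: eventually_elim2 simp: sdq_def f0_def \<sigma>_def)
  then show ?thesis
    by (simp add: frac_lap_def Phi_def integral_lebesgue_eq_lborel_AE)
qed

context
  fixes \<eta> :: "'a \<Rightarrow> real"
  assumes \<eta>: "std_mollifier \<eta>"
begin

declare scaled_mollifier_borel[OF \<eta>, measurable]

lemma integral_mollifier_sdq:
  assumes \<epsilon>: "\<epsilon> > 0"
  shows "(\<integral>z. scaled_mollifier \<eta> \<epsilon> z * sdq (x - z) y \<partial>lborel)
       = (mollify \<eta> \<epsilon> f (x + y) + mollify \<eta> \<epsilon> f (x - y) - 2 * mollify \<eta> \<epsilon> f x) / norm y powr \<sigma>"
proof -
  have "scaled_mollifier \<eta> \<epsilon> z * sdq (x - z) y
      = (f0 (x + y - z) * scaled_mollifier \<eta> \<epsilon> z + f0 (x - y - z) * scaled_mollifier \<eta> \<epsilon> z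
         - 2 * (f0 (x - z) * scaled_mollifier \<eta> \<epsilon> z)) / norm y powr \<sigma>" for z
    by (simp add: sdq_def algebra_simps add_divide_distrib diff_divide_distrib)
  then show ?thesis
    using integrable_f0_conv_mollifier[OF \<epsilon> \<eta>]
    by (simp add: mollify_eq_f0_conv[OF \<epsilon> \<eta>])
qed

lemma integrable_mollifier_sdq:
  assumes \<epsilon>: "\<epsilon> > 0" "\<epsilon> \<le> r"
  shows "integrable (lborel \<Otimes>\<^sub>M lborel) (\<lambda>(z, y). scaled_mollifier \<eta> \<epsilon> z * sdq (x - z) y)"
proof (rule lborel_pair.Fubini_integrable)
  have m[measurable]: "(\<lambda>p. scaled_mollifier \<eta> \<epsilon> (fst p) * sdq (x - fst p) (snd p))
      \<in> borel_measurable (lborel \<Otimes>\<^sub>M lborel)"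
    unfolding sdq_def by measurable
  then show "(\<lambda>(z, y). scaled_mollifier \<eta> \<epsilon> z * sdq (x - z) y) \<in> borel_measurable (lborel \<Otimes>\<^sub>M lborel)"
    by (simp add: case_prod_beta')
  have near: "x - z \<in> cball x r" if "scaled_mollifier \<eta> \<epsilon> z \<noteq> 0" for z
    using scaled_mollifier_support[OF \<eta> \<epsilon>(1) that] \<epsilon>(2) by (simp add: dist_norm)
  have inner_le: "(\<integral>y. norm (scaled_mollifier \<eta> \<epsilon> z * sdq (x - z) y) \<partial>lborel)
      \<le> scaled_mollifier \<eta> \<epsilon> z * majorant_bound" for z
  proof (cases "scaled_mollifier \<eta> \<epsilon> z = 0")
    case False
    then show ?thesis
      using integral_abs_sdq_le[OF near[OF False]] scaled_mollifier_nonneg[OF \<eta> \<epsilon>(1), of z]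
      by (simp add: abs_mult mult_left_mono)
  qed simp
  show "integrable lborel (\<lambda>z. \<integral>y. norm (case (z, y) of (z, y) \<Rightarrow>
      scaled_mollifier \<eta> \<epsilon> z * sdq (x - z) y) \<partial>lborel)"
  proof (rule Bochner_Integration.integrable_bound)
    show "integrable lborel (\<lambda>z. scaled_mollifier \<eta> \<epsilon> z * majorant_bound)"
      by (intro integrable_mult_left scaled_mollifier_integrable[OF \<eta> \<epsilon>(1)])
    show "AE z in lborel. norm (\<integral>y. norm (case (z, y) of (z, y) \<Rightarrow>
        scaled_mollifier \<eta> \<epsilon> z * sdq (x - z) y) \<partial>lborel)
        \<le> norm (scaled_mollifier \<eta> \<epsilon> z * majorant_bound)"
      using inner_le scaled_mollifier_nonneg[OF \<eta> \<epsilon>(1)] majorant_bound_nonneg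
      by (intro AE_I2) (simp add: abs_mult integral_nonneg_AE)
    show "(\<lambda>z. \<integral>y. norm (case (z, y) of (z, y) \<Rightarrow>
        scaled_mollifier \<eta> \<epsilon> z * sdq (x - z) y) \<partial>lborel) \<in> borel_measurable lborel"
      using lborel.borel_measurable_lebesgue_integral[of
        "\<lambda>z y. norm (scaled_mollifier \<eta> \<epsilon> z * sdq (x - z) y)" lborel] m
      by (simp add: case_prod_beta')
  qed
  show "AE z in lborel. integrable lborel (\<lambda>y. case (z, y) of (z, y) \<Rightarrow>
      scaled_mollifier \<eta> \<epsilon> z * sdq (x - z) y)"
    using integrable_sdq[OF near] by (intro AE_I2) (auto intro: integrable_mult_right)
qed

lemma frac_lap_mollify_eq:
  assumes \<epsilon>: "\<epsilon> > 0" "\<epsilon> \<le> r"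
  shows "frac_lap \<alpha> (mollify \<eta> \<epsilon> f) x
       = - frac_const DIM('a) \<alpha> * (\<integral>z. scaled_mollifier \<eta> \<epsilon> z * Phi (x - z) \<partial>lborel)"
proof -
  have "(\<lambda>u. \<integral>z. f0 (u - z) * scaled_mollifier \<eta> \<epsilon> z \<partial>lborel) \<in> borel_measurable borel"
    by (rule lborel.borel_measurable_lebesgue_integral[where f="\<lambda>u z. f0 (u - z) * scaled_mollifier \<eta> \<epsilon> z",
          simplified]) measurable
  moreover have "mollify \<eta> \<epsilon> f = (\<lambda>u. \<integral>z. f0 (u - z) * scaled_mollifier \<eta> \<epsilon> z \<partial>lborel)"
    using mollify_eq_f0_conv[OF \<epsilon>(1) \<eta>] by (intro ext)
  ultimately have [measurable]: "mollify \<eta> \<epsilon> f \<in> borel_measurable borel" by simp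
  have "(\<integral>y. (mollify \<eta> \<epsilon> f (x + y) + mollify \<eta> \<epsilon> f (x - y) - 2 * mollify \<eta> \<epsilon> f x)
          / norm y powr (real DIM('a) + 2 * \<alpha>) \<partial>lebesgue)
      = (\<integral>y. (\<integral>z. scaled_mollifier \<eta> \<epsilon> z * sdq (x - z) y \<partial>lborel) \<partial>lborel)"
    using integral_mollifier_sdq[OF \<epsilon>(1)] by (subst integral_completion) (auto simp: \<sigma>_def)
  also have "\<dots> = (\<integral>z. (\<integral>y. scaled_mollifier \<eta> \<epsilon> z * sdq (x - z) y \<partial>lborel) \<partial>lborel)"
    using lborel_pair.Fubini_integral[OF integrable_mollifier_sdq[OF \<epsilon>]] by simp
  also have "\<dots> = (\<integral>z. scaled_mollifier \<eta> \<epsilon> z * Phi (x - z) \<partial>lborel)"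
    by (simp add: Phi_def)
  finally show ?thesis by (simp add: frac_lap_def)
qed

lemma frac_lap_mollify_tendsto:
  "((\<lambda>\<epsilon>. frac_lap \<alpha> (mollify \<eta> \<epsilon> f) x) \<longlongrightarrow> frac_lap \<alpha> f x) (at_right 0)"
proof -
  have "((\<lambda>\<epsilon>. \<integral>z. scaled_mollifier \<eta> \<epsilon> z * Phi (x - z) \<partial>lborel) \<longlongrightarrow> Phi x) (at_right 0)"
    by (rule approximate_identity_tendsto[OF scaled_mollifier_nonneg[OF \<eta>]
          scaled_mollifier_integrable[OF \<eta>] scaled_mollifier_integral[OF \<eta>]
          scaled_mollifier_support[OF \<eta>] Phi_borel Phi_isCont])
  then have "((\<lambda>\<epsilon>. - frac_const DIM('a) \<alpha> * (\<integral>z. scaled_mollifier \<eta> \<epsilon> z * Phi (x - z) \<partial>lborel))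
      \<longlongrightarrow> frac_lap \<alpha> f x) (at_right 0)"
    unfolding frac_lap_eq_Phi by (rule tendsto_mult_left)
  moreover have "eventually (\<lambda>\<epsilon>. - frac_const DIM('a) \<alpha> * (\<integral>z. scaled_mollifier \<eta> \<epsilon> z * Phi (x - z) \<partial>lborel)
      = frac_lap \<alpha> (mollify \<eta> \<epsilon> f) x) (at_right 0)"
    unfolding eventually_at_right[OF r_pos] by (auto intro!: exI[of _ r] simp: frac_lap_mollify_eq r_pos)
  ultimately show ?thesis by (rule Lim_transform_eventually)
qed

end

end

theorem lemma3p12:
  fixes \<alpha> :: real and \<Lambda> :: "'a::euclidean_space set"
    and f \<eta> :: "'a \<Rightarrow> real" and x :: 'a
  assumes "0 < \<alpha>" "\<alpha> < 1"
    and "closed \<Lambda>" "\<Lambda> \<in> null_sets lebesgue"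
    and "f \<in> L2alpha \<alpha>" "smooth_on f (- \<Lambda>)"
    and "std_mollifier \<eta>"
    and "x \<notin> \<Lambda>"
  shows "((\<lambda>\<epsilon>. frac_lap \<alpha> (mollify \<eta> \<epsilon> f) x) \<longlongrightarrow> frac_lap \<alpha> f x) (at_right 0)"
proof -
  interpret frac_lap_setting \<alpha> \<Lambda> f
    by unfold_locales (use assms in auto)
  obtain r M where r: "r > 0" "M \<ge> 0" "cball x (2 * r) \<subseteq> - \<Lambda>"
    and second_difference: "\<And>w y. w \<in> cball x r \<Longrightarrow> y \<in> cball 0 r \<Longrightarrow>
        \<bar>f (w + y) + f (w - y) - 2 * f w\<bar> \<le> M * (norm y)\<^sup>2"
    using smooth_on_second_difference_local[OF f_smooth] \<Lambda>_closed \<open>x \<notin> \<Lambda>\<close>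
    by (metis ComplI open_Compl)
  have "cball x r \<subseteq> - \<Lambda>" using r subset_cball[of r "2 * r" x] by auto
  then obtain F where "\<And>w. w \<in> cball x r \<Longrightarrow> \<bar>f w\<bar> \<le> F"
    using compact_continuous_image[OF continuous_on_subset[OF f_continuous_on] compact_cball]
    by (metis bounded_real compact_imp_bounded imageI)
  then interpret frac_lap_local \<alpha> \<Lambda> f x r M F
    by unfold_locales (use r second_difference in auto)
  show ?thesis by (rule frac_lap_mollify_tendsto[OF \<open>std_mollifier \<eta>\<close>])
qed

end
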